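(* Let $n\in\mathbb{N}$, $1<p<q$, and $0<\omega<\omega_{p,q}$, where $$\omega_{p,q}=\frac{2(q-p)}{(p+1)(q-1)}\left[\frac{(p-1)(q+1)}{(p+1)(q-1)}\right]^{\frac{p-1}{q-p}}.$$ Let $f(u)=-\omega u+u^p-u^q$, $F(u)=\int_0^u f(s)\,ds=-\frac{\omega}{2}u^2+\frac{u^{p+1}}{p+1}-\frac{u^{q+1}}{q+1}$, and $$\Sigma(u)=2nF(u)-(n-2)uf(u)\qquad (u\ge 0).$$ Then there exist $0<B<C\le\infty$ (depending on $\omega,p,q$ and $n$) such that $\Sigma(u)<0$ for all $u\in(0,B)$ and $\Sigma(u)>0$ for all $u\in(B,C)$.
   Context: Throughout, $\omega_{p,q}$ is the threshold such that $F(u)>0$ for some $u>0$ if and only if $\omega<\omega_{p,q}$. *)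

theory Defs
  imports "HOL-Analysis.Analysis"
begin

definition omega_pq :: "real \<Rightarrow> real \<Rightarrow> real" where
  "omega_pq p q = (2 * (q - p)) / ((p + 1) * (q - 1)) *
     (((p - 1) * (q + 1)) / ((p + 1) * (q - 1))) powr ((p - 1) / (q - p))"

definition f_nl :: "real \<Rightarrow> real \<Rightarrow> real \<Rightarrow> real \<Rightarrow> real" where
  "f_nl \<omega> p q u = - \<omega> * u + u powr p - u powr q"

definition F_nl :: "real \<Rightarrow> real \<Rightarrow> real \<Rightarrow> real \<Rightarrow> real" where
  "F_nl \<omega> p q u = - (\<omega> / 2) * u\<^sup>2 + u powr (p + 1) / (p + 1) - u powr (q + 1) / (q + 1)"

definition Sigma_nl :: "nat \<Rightarrow> real \<Rightarrow> real \<Rightarrow> real \<Rightarrow> real \<Rightarrow> real" where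
  "Sigma_nl n \<omega> p q u = 2 * real n * F_nl \<omega> p q u - (real n - 2) * u * f_nl \<omega> p q u"

end

theory Submission
  imports Defs
begin

(*
  For u > 0 the function Sigma factors as
      Sigma(u) = u^(p+1) * phi(u),
      phi(u)   = -2 omega u^(1-p) + a_p - a_q u^(q-p),   a_s = 2n/(s+1) - (n-2),
  so Sigma and phi have the same sign on (0, oo).  Three facts about phi suffice:
    (1) phi < 0 near 0, since u^(p-1) phi(u) tends to -2 omega < 0;
    (2) phi is strictly quasiconcave on (0, oo): its derivative
        u^(-p) (2 omega (p-1) - a_q (q-p) u^(q-1)) changes sign at most once,
        from positive to negative;
    (3) phi(u0) > 0 at u0 = r^(1/(q-p)), r = (p-1)(q+1)/((p+1)(q-1)); in fact
        phi(u0) is a positive multiple of omega_pq - omega.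
  A purely order-theoretic lemma then shows that a continuous, strictly
  quasiconcave function with (1) and (3) is negative on (0, B) and positive on
  (B, C), where B is the infimum and C the supremum of its positivity set.
*)

lemma strictly_quasiconcave_by_derivative:
  fixes f D :: "real \<Rightarrow> real" and a :: real
  assumes deriv: "\<And>t. a < t \<Longrightarrow> (f has_real_derivative D t) (at t)"
    and single_sign_change: "\<And>s t. a < s \<Longrightarrow> s < t \<Longrightarrow> D s \<le> 0 \<Longrightarrow> D t < 0"
    and "a < x" "x < y" "y < z"
  shows "min (f x) (f z) < f y"
proof (rule ccontr)
  assume "\<not> ?thesis"
  hence fy_x: "f y \<le> f x" and fy_z: "f y \<le> f z" by auto
  obtain s1 where s1: "x < s1" "s1 < y" "f y - f x = (y - x) * D s1"
    using MVT2[of x y f D] deriv assms(3-5) by force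
  obtain s2 where s2: "y < s2" "s2 < z" "f z - f y = (z - y) * D s2"
    using MVT2[of y z f D] deriv assms(3-5) by force
  have "(y - x) * D s1 \<le> 0" using s1 fy_x by linarith
  hence "D s1 \<le> 0" using \<open>x < y\<close> by (simp add: mult_le_0_iff)
  hence "D s2 < 0"
    using single_sign_change[of s1 s2] s1 s2 \<open>a < x\<close> by linarith
  moreover have "0 \<le> (z - y) * D s2"
    using s2 fy_z by linarith
  ultimately show False
    using \<open>y < z\<close> by (simp add: zero_le_mult_iff)
qed

lemma positive_beyond:
  fixes f :: "real \<Rightarrow> real"
  assumes "isCont f u" and "0 < f u"
  shows "\<exists>v>u. 0 < f v"
proof -
  have "(f \<longlongrightarrow> f u) (at_right u)"
    using assms(1) by (simp add: isCont_def filterlim_at_split)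
  hence "eventually (\<lambda>x. 0 < f x) (at_right u)"
    using assms(2) by (rule order_tendstoD(1))
  then obtain b where "u < b" and b: "\<And>x. u < x \<Longrightarrow> x < b \<Longrightarrow> 0 < f x"
    unfolding eventually_at_right_field by auto
  thus ?thesis using b[of "(u + b) / 2"] by (intro exI[of _ "(u + b) / 2"]) auto
qed

lemma sign_change_of_quasiconcave:
  fixes f :: "real \<Rightarrow> real"
  assumes cont: "\<And>u. 0 < u \<Longrightarrow> isCont f u"
    and quasiconcave: "\<And>x y z. 0 < x \<Longrightarrow> x < y \<Longrightarrow> y < z \<Longrightarrow> min (f x) (f z) < f y"
    and neg_near_0: "eventually (\<lambda>u. f u < 0) (at_right 0)"
    and "0 < u\<^sub>0" and "0 < f u\<^sub>0"
  shows "\<exists>B::real. \<exists>C::ereal. 0 < B \<and> ereal B < C \<and>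
           (\<forall>u. 0 < u \<and> u < B \<longrightarrow> f u < 0) \<and> (\<forall>u. B < u \<and> ereal u < C \<longrightarrow> f u > 0)"
proof -
  define P where "P = {u. 0 < u \<and> 0 < f u}"
  define B where "B = Inf P"
  define C where "C = Sup (ereal ` P)"
  have u0_P: "u\<^sub>0 \<in> P" unfolding P_def using assms(4,5) by simp
  obtain d where "d > 0" and d: "\<And>u. 0 < u \<Longrightarrow> u < d \<Longrightarrow> f u < 0"
    using neg_near_0 by (auto simp: eventually_at_right_field)
  have P_above_d: "d \<le> x" if "x \<in> P" for x
    using that d unfolding P_def by force
  hence bdd: "bdd_below P" by (auto simp: bdd_below_def)
  have "d \<le> B" unfolding B_def using u0_P P_above_d by (intro cInf_greatest) auto
  hence "0 < B" using \<open>d > 0\<close> by simp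
  have "B \<le> u\<^sub>0" unfolding B_def using u0_P bdd by (rule cInf_lower)
  text \<open>By continuity, P also contains points beyond u0, so B < C.\<close>
  obtain v where "u\<^sub>0 < v" "0 < f v"
    using positive_beyond[OF cont[OF assms(4)] assms(5)] by blast
  hence "v \<in> P" unfolding P_def using assms(4) by simp
  have "ereal B < ereal v" using \<open>B \<le> u\<^sub>0\<close> \<open>u\<^sub>0 < v\<close> by simp
  also have "\<dots> \<le> C" unfolding C_def using \<open>v \<in> P\<close> by (simp add: Sup_upper)
  finally have "ereal B < C" .
  text \<open>Below B, f is non-positive; a zero u would force points of P between u and B.\<close>
  have neg: "f u < 0" if "0 < u" "u < B" for u
  proof -
    have "u \<notin> P" using that bdd unfolding B_def by (meson cInf_lower not_le)
    hence "f u \<le> 0" using that unfolding P_def by auto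
    moreover have "f u \<noteq> 0"
    proof
      assume "f u = 0"
      let ?y = "(u + B) / 2"
      have "min (f u) (f u\<^sub>0) < f ?y"
        using quasiconcave[of u ?y u\<^sub>0] that \<open>B \<le> u\<^sub>0\<close> by simp
      hence "?y \<in> P" using \<open>f u = 0\<close> assms(5) that unfolding P_def by auto
      hence "B \<le> ?y" unfolding B_def using bdd by (rule cInf_lower)
      thus False using that by simp
    qed
    ultimately show ?thesis by simp
  qed
  text \<open>Between B and C, f lies above its value at two points of P, one on each side.\<close>
  have pos: "0 < f u" if u: "B < u" "ereal u < C" for u
  proof -
    obtain z where z: "z \<in> P" "u < z" using u(2) unfolding C_def less_Sup_iff by auto
    obtain x where x: "x \<in> P" "x < u"
      using u(1) cInf_less_iff[of P u] u0_P bdd unfolding B_def by auto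
    have "min (f x) (f z) < f u" using quasiconcave[of x u z] x z unfolding P_def by auto
    thus ?thesis using x z unfolding P_def by auto
  qed
  show ?thesis using \<open>0 < B\<close> \<open>ereal B < C\<close> neg pos by blast
qed

definition coeff :: "nat \<Rightarrow> real \<Rightarrow> real" where
  "coeff n s = 2 * real n / (s + 1) - (real n - 2)"

definition phi :: "nat \<Rightarrow> real \<Rightarrow> real \<Rightarrow> real \<Rightarrow> real \<Rightarrow> real" where
  "phi n \<omega> p q u = -2 * \<omega> * u powr (1 - p) + coeff n p - coeff n q * u powr (q - p)"

lemma Sigma_eq_phi:
  assumes "0 < u"
  shows "Sigma_nl n \<omega> p q u = u powr (p + 1) * phi n \<omega> p q u"
proof -
  have up: "u * u powr p = u powr (p + 1)" and uq: "u * u powr q = u powr (q + 1)"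
    using assms by (simp_all add: powr_add)
  have "u powr (p + 1) * u powr (1 - p) = u\<^sup>2"
    using assms by (simp add: powr_add[symmetric])
  moreover have "u powr (p + 1) * u powr (q - p) = u powr (q + 1)"
    using powr_add[of u "p + 1" "q - p"] by (simp add: add.commute)
  ultimately have "u powr (p + 1) * phi n \<omega> p q u
      = -2 * \<omega> * u\<^sup>2 + coeff n p * (u * u powr p) - coeff n q * (u * u powr q)"
    unfolding phi_def up uq by (simp add: algebra_simps)
  also have "\<dots> = Sigma_nl n \<omega> p q u"
    unfolding Sigma_nl_def F_nl_def f_nl_def coeff_def up[symmetric] uq[symmetric]
    by (simp add: algebra_simps diff_divide_distrib add_divide_distrib power2_eq_square)
  finally show ?thesis by simp
qed

lemma phi_has_derivative:
  assumes "0 < t"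
  shows "(phi n \<omega> p q has_real_derivative
           t powr (-p) * (2 * \<omega> * (p - 1) - coeff n q * (q - p) * t powr (q - 1))) (at t)"
proof -
  have "t powr (q - p - 1) = t powr (-p) * t powr (q - 1)"
    using powr_add[of t "-p" "q - 1"] by (simp add: algebra_simps)
  moreover have "(phi n \<omega> p q has_real_derivative
      -2 * \<omega> * ((1 - p) * t powr (-p)) - coeff n q * ((q - p) * t powr (q - p - 1))) (at t)"
    unfolding phi_def[abs_def] using assms
    by (auto intro!: derivative_eq_intros simp: algebra_simps)
  ultimately show ?thesis by (simp add: algebra_simps)
qed

text \<open>The bracket in the derivative is positive at 0 and, once it reaches 0, keeps
  decreasing (its slope sign is that of coeff n q, which must then be positive).\<close>

lemma phi_strictly_quasiconcave:
  assumes "1 < p" "p < q" "0 < \<omega>" "0 < x" "x < y" "y < z"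
  shows "min (phi n \<omega> p q x) (phi n \<omega> p q z) < phi n \<omega> p q y"
proof (rule strictly_quasiconcave_by_derivative[OF phi_has_derivative _ assms(4-6)])
  fix s t :: real
  let ?bracket = "\<lambda>t. 2 * \<omega> * (p - 1) - coeff n q * (q - p) * t powr (q - 1)"
  assume "0 < s" "s < t" and "s powr (-p) * ?bracket s \<le> 0"
  hence bracket_s: "?bracket s \<le> 0" by (simp add: mult_le_0_iff)
  have "0 < 2 * \<omega> * (p - 1)" using assms by simp
  hence "0 < coeff n q * ((q - p) * s powr (q - 1))" using bracket_s by (simp add: mult.assoc)
  moreover have "0 < (q - p) * s powr (q - 1)" using assms \<open>0 < s\<close> by simp
  ultimately have "0 < coeff n q" by (simp add: zero_less_mult_iff)
  moreover have "(q - p) * s powr (q - 1) < (q - p) * t powr (q - 1)"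
    using assms \<open>0 < s\<close> \<open>s < t\<close> by (simp add: powr_less_mono2)
  ultimately have "?bracket t < ?bracket s" by (simp add: mult.assoc)
  thus "t powr (-p) * ?bracket t < 0"
    using bracket_s \<open>0 < s\<close> \<open>s < t\<close> by (simp add: mult_pos_neg)
qed (use assms in auto)

text \<open>Near 0 the term -2 omega u^(1-p) dominates: u^(p-1) phi(u) tends to -2 omega.\<close>

lemma phi_negative_near_0:
  assumes "1 < p" "p < q" "0 < \<omega>"
  shows "eventually (\<lambda>u. phi n \<omega> p q u < 0) (at_right 0)"
proof -
  have powr_to_0: "((\<lambda>u. u powr e) \<longlongrightarrow> 0) (at_right 0)" if "0 < e" for e :: real
    using that by (intro tendsto_zero_powrI[OF tendsto_ident_at])
      (auto intro: eventually_mono[OF eventually_at_right_less])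
  have "((\<lambda>u. -2 * \<omega> + coeff n p * u powr (p - 1) - coeff n q * u powr (q - 1))
          \<longlongrightarrow> -2 * \<omega> + coeff n p * 0 - coeff n q * 0) (at_right 0)"
    using assms by (intro tendsto_intros powr_to_0) auto
  hence "eventually (\<lambda>u. -2 * \<omega> + coeff n p * u powr (p - 1) - coeff n q * u powr (q - 1) < 0)
           (at_right 0)"
    by (rule order_tendstoD(2)) (use assms in simp)
  moreover have "eventually (\<lambda>u. 0 < u) (at_right (0::real))" by (rule eventually_at_right_less)
  ultimately show ?thesis
  proof eventually_elim
    case (elim u)
    have "u powr (p - 1) * phi n \<omega> p q u
        = -2 * \<omega> + coeff n p * u powr (p - 1) - coeff n q * u powr (q - 1)"
      using elim(2) unfolding phi_def by (simp add: algebra_simps powr_add[symmetric])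
    hence "u powr (p - 1) * phi n \<omega> p q u < 0" using elim(1) by linarith
    moreover have "0 < u powr (p - 1)" using elim(2) by simp
    ultimately show ?case by (simp add: mult_less_0_iff)
  qed
qed

text \<open>The algebraic identity behind the threshold: with r as below,
  coeff p - coeff q * r = 4 (q - p) / ((p + 1)(q - 1)), independently of n.\<close>

lemma coeff_identity:
  assumes "1 < p" "p < q"
  shows "coeff n p - coeff n q * ((p - 1) * (q + 1) / ((p + 1) * (q - 1)))
           = 4 * (q - p) / ((p + 1) * (q - 1))"
proof -
  have "p + 1 \<noteq> 0" "q + 1 \<noteq> 0" "q - 1 \<noteq> 0" using assms by auto
  thus ?thesis unfolding coeff_def by (simp add: divide_simps) (simp add: algebra_simps)
qed

text \<open>At u0 = r^(1/(q-p)) the function phi equals 2 (omega_pq - omega) / r^((p-1)/(q-p)),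
  so it is positive exactly below the threshold.\<close>

lemma phi_positive_somewhere:
  assumes "1 < p" "p < q" "\<omega> < omega_pq p q"
  shows "\<exists>u>0. 0 < phi n \<omega> p q u"
proof -
  define r where "r = (p - 1) * (q + 1) / ((p + 1) * (q - 1))"
  define X where "X = r powr ((p - 1) / (q - p))"
  define u where "u = r powr (1 / (q - p))"
  have "0 < r" unfolding r_def using assms by (simp add: zero_less_divide_iff)
  hence "0 < X" "0 < u" unfolding X_def u_def by simp_all
  have "u powr (1 - p) = inverse X"
    unfolding u_def X_def using assms
    by (simp add: powr_powr powr_minus[symmetric] minus_divide_left)
  moreover have "u powr (q - p) = r"
    unfolding u_def using assms \<open>0 < r\<close> by (simp add: powr_powr)
  moreover have "omega_pq p q = 2 * (q - p) / ((p + 1) * (q - 1)) * X"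
    unfolding omega_pq_def X_def r_def by simp
  ultimately have "phi n \<omega> p q u = -2 * \<omega> / X + 4 * (q - p) / ((p + 1) * (q - 1))"
    unfolding phi_def using coeff_identity[OF assms(1,2), of n]
    by (simp add: r_def divide_inverse)
  also have "\<dots> = 2 * (omega_pq p q - \<omega>) / X"
    unfolding \<open>omega_pq p q = _\<close> using \<open>0 < X\<close> by (simp add: field_simps)
  also have "\<dots> > 0" using assms \<open>0 < X\<close> by simp
  finally show ?thesis using \<open>0 < u\<close> by blast
qed

theorem theorem1:
  fixes n :: nat and p q \<omega> :: real
  assumes "1 < p" and "p < q" and "0 < \<omega>" and "\<omega> < omega_pq p q"
  shows "\<exists>B::real. \<exists>C::ereal. 0 < B \<and> ereal B < C \<and>
           (\<forall>u. 0 < u \<and> u < B \<longrightarrow> Sigma_nl n \<omega> p q u < 0) \<and>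
           (\<forall>u. B < u \<and> ereal u < C \<longrightarrow> Sigma_nl n \<omega> p q u > 0)"
proof -
  obtain u\<^sub>0 where "0 < u\<^sub>0" "0 < phi n \<omega> p q u\<^sub>0"
    using phi_positive_somewhere[OF assms(1,2,4)] by blast
  then have "\<exists>B::real. \<exists>C::ereal. 0 < B \<and> ereal B < C \<and>
      (\<forall>u. 0 < u \<and> u < B \<longrightarrow> phi n \<omega> p q u < 0) \<and>
      (\<forall>u. B < u \<and> ereal u < C \<longrightarrow> phi n \<omega> p q u > 0)"
    by (intro sign_change_of_quasiconcave phi_has_derivative[THEN DERIV_isCont]
          phi_strictly_quasiconcave[OF assms(1-3)] phi_negative_near_0[OF assms(1-3)])
  then obtain B C where "0 < B" "ereal B < C"
      and neg: "\<And>u. 0 < u \<Longrightarrow> u < B \<Longrightarrow> phi n \<omega> p q u < 0"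
      and pos: "\<And>u. B < u \<Longrightarrow> ereal u < C \<Longrightarrow> 0 < phi n \<omega> p q u"
    by blast
  have "Sigma_nl n \<omega> p q u < 0" if "0 < u" "u < B" for u
    using neg[OF that] Sigma_eq_phi[OF that(1)] that(1) by (simp add: mult_pos_neg)
  moreover have "Sigma_nl n \<omega> p q u > 0" if "B < u" "ereal u < C" for u
    using pos[OF that] Sigma_eq_phi[of u] that \<open>0 < B\<close> by simp
  ultimately show ?thesis using \<open>0 < B\<close> \<open>ereal B < C\<close> by blast
qed

end
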